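(* The Levi graph $LG_2$ has no proper distinguishing monochromatic $3$-coloring.
   Context: Let $V=\mathbb{F}_2^3$; $LG_2$ is the bipartite graph whose vertices are the $1$-dimensional subspaces ("points") and the $2$-dimensional subspaces ("lines") of $V$, a point being adjacent to a line iff it is contained in it. A coloring of $LG_2$ is monochromatic if all points receive the same color or all lines receive the same color. A coloring is distinguishing if the only graph automorphism mapping every color class onto itself is the identity. *)

theory Defs
  imports Main
begin

text \<open>The vector space V = F_2^3, with F_2 represented by bool (True = 1),
  addition = componentwise exclusive or.\<close>

type_synonym vec3 = "bool \<times> bool \<times> bool"

definition vzero :: vec3 where
  "vzero = (False, False, False)"

definition vadd :: "vec3 \<Rightarrow> vec3 \<Rightarrow> vec3" where
  "vadd u v = (case u of (a1, a2, a3) \<Rightarrow> case v of (b1, b2, b3) \<Rightarrow>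
      (a1 \<noteq> b1, a2 \<noteq> b2, a3 \<noteq> b3))"

text \<open>Over F_2 a subset is a linear subspace iff it contains 0 and is closed
  under addition (scalar multiplication by 0 or 1 is automatic).
  A subspace of dimension k has exactly 2^k elements.\<close>

definition subspace2 :: "vec3 set \<Rightarrow> bool" where
  "subspace2 W \<longleftrightarrow> vzero \<in> W \<and> (\<forall>u\<in>W. \<forall>v\<in>W. vadd u v \<in> W)"

definition subspace_dim :: "vec3 set \<Rightarrow> nat \<Rightarrow> bool" where
  "subspace_dim W k \<longleftrightarrow> subspace2 W \<and> card W = 2 ^ k"

definition LG2_points :: "vec3 set set" where
  "LG2_points = {W. subspace_dim W 1}"

definition LG2_lines :: "vec3 set set" where
  "LG2_lines = {W. subspace_dim W 2}"

definition LG2_verts :: "vec3 set set" where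
  "LG2_verts = LG2_points \<union> LG2_lines"

definition LG2_adj :: "vec3 set \<Rightarrow> vec3 set \<Rightarrow> bool" where
  "LG2_adj x y \<longleftrightarrow>
     (x \<in> LG2_points \<and> y \<in> LG2_lines \<and> x \<subseteq> y) \<or>
     (y \<in> LG2_points \<and> x \<in> LG2_lines \<and> y \<subseteq> x)"

definition LG2_automorphism :: "(vec3 set \<Rightarrow> vec3 set) \<Rightarrow> bool" where
  "LG2_automorphism \<sigma> \<longleftrightarrow> bij_betw \<sigma> LG2_verts LG2_verts \<and>
     (\<forall>x\<in>LG2_verts. \<forall>y\<in>LG2_verts. LG2_adj (\<sigma> x) (\<sigma> y) \<longleftrightarrow> LG2_adj x y)"

definition three_coloring :: "(vec3 set \<Rightarrow> nat) \<Rightarrow> bool" where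
  "three_coloring c \<longleftrightarrow> (\<forall>x\<in>LG2_verts. c x < 3)"

definition proper_coloring :: "(vec3 set \<Rightarrow> nat) \<Rightarrow> bool" where
  "proper_coloring c \<longleftrightarrow> (\<forall>x\<in>LG2_verts. \<forall>y\<in>LG2_verts. LG2_adj x y \<longrightarrow> c x \<noteq> c y)"

definition monochromatic_coloring :: "(vec3 set \<Rightarrow> nat) \<Rightarrow> bool" where
  "monochromatic_coloring c \<longleftrightarrow>
     (\<forall>x\<in>LG2_points. \<forall>y\<in>LG2_points. c x = c y) \<or>
     (\<forall>x\<in>LG2_lines. \<forall>y\<in>LG2_lines. c x = c y)"

text \<open>An automorphism maps every color class onto itself iff it preserves
  the color of every vertex.\<close>
definition distinguishing_coloring :: "(vec3 set \<Rightarrow> nat) \<Rightarrow> bool" where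
  "distinguishing_coloring c \<longleftrightarrow>
     (\<forall>\<sigma>. LG2_automorphism \<sigma> \<and> (\<forall>x\<in>LG2_verts. c (\<sigma> x) = c x)
        \<longrightarrow> (\<forall>x\<in>LG2_verts. \<sigma> x = x))"

end

theory Submission
  imports Defs
begin

text \<open>Suppose all points receive one colour a; the case of monochromatic lines is dual.
  Since every line contains a point, properness forces the lines to use only the two other
  colours, i.e. to carry a 2-colouring of the nonzero vectors f of the dual space, where
  f stands for the line f^\<bottom>.  Every 2-colouring S of F_2^3 is preserved by some transvection
  x \<mapsto> x + (p\<cdot>x) w with p, w \<noteq> 0 and p\<cdot>w = 0: summing over three nonzero p forming a
  line shows that for one of them S meets the affine plane p\<cdot>x = 1 in an even number of
  vectors, and those four vectors can then be paired by a translation w \<in> p^\<bottom> so that each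
  pair lies inside or outside S.  The transvection induces a nontrivial automorphism of
  LG_2 preserving every colour class, so the colouring is not distinguishing.\<close>

lemma vadd_assoc: "vadd (vadd x y) z = vadd x (vadd y z)"
  by (cases x; cases y; cases z) (auto simp: vadd_def)

lemma vadd_comm: "vadd x y = vadd y x"
  by (cases x; cases y) (auto simp: vadd_def)

lemma vadd_left_commute: "vadd x (vadd y z) = vadd y (vadd x z)"
  by (cases x; cases y; cases z) (auto simp: vadd_def)

lemma vadd_cancel_left [simp]: "vadd x (vadd x z) = z"
  by (cases x; cases z) (auto simp: vadd_def)

lemma vadd_right_cancel [simp]: "vadd x z = vadd y z \<longleftrightarrow> x = y"
  by (cases x; cases y; cases z) (auto simp: vadd_def)

lemma vadd_self [simp]: "vadd x x = vzero"
  by (cases x) (auto simp: vadd_def vzero_def)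

lemma vadd_vzero [simp]: "vadd x vzero = x" "vadd vzero x = x"
  by (cases x; auto simp: vadd_def vzero_def)+

lemma vadd_eq_self_iff [simp]:
  "vadd x y = x \<longleftrightarrow> y = vzero" "vadd y x = x \<longleftrightarrow> y = vzero"
  "x = vadd x y \<longleftrightarrow> y = vzero" "x = vadd y x \<longleftrightarrow> y = vzero"
  by (cases x; cases y; auto simp: vadd_def vzero_def)+

lemma vadd_eq_vzero_iff [simp]: "vadd x y = vzero \<longleftrightarrow> x = y" "vzero = vadd x y \<longleftrightarrow> x = y"
  by (cases x; cases y; auto simp: vadd_def vzero_def)+

definition dot :: "vec3 \<Rightarrow> vec3 \<Rightarrow> bool" where
  "dot f x = (case f of (f1, f2, f3) \<Rightarrow> case x of (x1, x2, x3) \<Rightarrow>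
      ((f1 \<and> x1) \<noteq> ((f2 \<and> x2) \<noteq> (f3 \<and> x3))))"

lemma dot_vzero [simp]: "dot f vzero = False" "dot vzero f = False"
  by (auto simp: dot_def vzero_def split: prod.splits)

lemma dot_commute: "dot f x = dot x f"
  by (auto simp: dot_def split: prod.splits)

lemma dot_vadd_right: "dot f (vadd x y) \<longleftrightarrow> dot f x \<noteq> dot f y"
  by (cases f; cases x; cases y) (auto simp: dot_def vadd_def)

lemma dot_vadd_left: "dot (vadd x y) f \<longleftrightarrow> dot x f \<noteq> dot y f"
  using dot_vadd_right dot_commute by metis

lemma ex_not_dot_nonzero: "\<exists>v. v \<noteq> vzero \<and> \<not> dot f v"
  by (cases f) (simp add: ex_bool_eq dot_def vzero_def)

lemma ex_dot: "f \<noteq> vzero \<Longrightarrow> \<exists>v. dot f v"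
  by (cases f) (auto simp: ex_bool_eq dot_def vzero_def)

lemma card_UNIV_vec3: "card (UNIV :: vec3 set) = 8"
  by (simp flip: UNIV_Times_UNIV add: card_cartesian_product)

definition hyperplane :: "vec3 \<Rightarrow> vec3 set" where
  "hyperplane f = {x. \<not> dot f x}"

definition vec3_enum :: "vec3 list" where
  "vec3_enum = [(False,False,False), (False,False,True), (False,True,False), (False,True,True),
    (True,False,False), (True,False,True), (True,True,False), (True,True,True)]"

lemma vec3_Collect_eq: "{x :: vec3. P x} = set (filter P vec3_enum)"
proof -
  have "x \<in> set vec3_enum" for x :: vec3
    by (cases x) (simp add: vec3_enum_def, blast)
  then show ?thesis by auto
qed

lemma card_hyperplane: "f \<noteq> vzero \<Longrightarrow> card (hyperplane f) = 4"
  unfolding hyperplane_def vec3_Collect_eq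
  by (cases f) (auto simp: vec3_enum_def dot_def vzero_def)

lemma subspace2_hyperplane: "subspace2 (hyperplane f)"
  by (auto simp: subspace2_def hyperplane_def dot_vadd_right)

lemma LG2_points_iff: "W \<in> LG2_points \<longleftrightarrow> (\<exists>v. v \<noteq> vzero \<and> W = {vzero, v})"
proof
  assume "W \<in> LG2_points"
  then have "vzero \<in> W" "card W = 2"
    by (auto simp: LG2_points_def subspace_dim_def subspace2_def)
  moreover from \<open>card W = 2\<close> obtain x y where "x \<noteq> y" "W = {x, y}"
    unfolding card_2_iff by blast
  ultimately show "\<exists>v. v \<noteq> vzero \<and> W = {vzero, v}"
    by (metis insertE insert_commute singletonD)
next
  assume "\<exists>v. v \<noteq> vzero \<and> W = {vzero, v}"
  then show "W \<in> LG2_points"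
    by (auto simp: LG2_points_def subspace_dim_def subspace2_def)
qed

definition cross :: "vec3 \<Rightarrow> vec3 \<Rightarrow> vec3" where
  "cross a b = (case a of (a1, a2, a3) \<Rightarrow> case b of (b1, b2, b3) \<Rightarrow>
     ((a2 \<and> b3) \<noteq> (a3 \<and> b2), (a3 \<and> b1) \<noteq> (a1 \<and> b3), (a1 \<and> b2) \<noteq> (a2 \<and> b1)))"

lemma cross_nonzero: "a \<noteq> vzero \<Longrightarrow> b \<noteq> vzero \<Longrightarrow> a \<noteq> b \<Longrightarrow> cross a b \<noteq> vzero"
  by (cases a; cases b) (auto simp: cross_def vzero_def)

lemma dot_cross: "\<not> dot (cross a b) a" "\<not> dot (cross a b) b"
  by (cases a; cases b; auto simp: cross_def dot_def)+

lemma LG2_lines_iff: "W \<in> LG2_lines \<longleftrightarrow> (\<exists>f. f \<noteq> vzero \<and> W = hyperplane f)"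
proof
  assume "W \<in> LG2_lines"
  then have W: "vzero \<in> W" "card W = 4" "\<And>u v. u \<in> W \<Longrightarrow> v \<in> W \<Longrightarrow> vadd u v \<in> W"
    by (auto simp: LG2_lines_def subspace_dim_def subspace2_def)
  obtain a b where ab: "a \<in> W" "b \<in> W" "a \<noteq> vzero" "b \<noteq> vzero" "a \<noteq> b"
  proof -
    have "card (W - {vzero}) = 3" using W by simp
    then obtain a b c where "W - {vzero} = {a, b, c}" "a \<noteq> b"
      unfolding card_3_iff by blast
    then show thesis using that by blast
  qed
  define f where "f = cross a b"
  have f: "f \<noteq> vzero" unfolding f_def using ab(3-5) by (rule cross_nonzero)
  define S where "S = {vzero, a, b, vadd a b}"
  have "vzero \<notin> {a, b, vadd a b}" "a \<notin> {b, vadd a b}" "b \<noteq> vadd a b"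
    using ab by auto
  then have "card S = 4" by (simp add: S_def)
  moreover have "S \<subseteq> W" using W ab by (simp add: S_def)
  moreover have "S \<subseteq> hyperplane f"
    using dot_cross by (simp add: S_def f_def hyperplane_def dot_vadd_right)
  ultimately have "S = W" "S = hyperplane f"
    using W(2) card_hyperplane[OF f] by (simp_all add: card_subset_eq)
  then show "\<exists>f. f \<noteq> vzero \<and> W = hyperplane f" using f by blast
next
  assume "\<exists>f. f \<noteq> vzero \<and> W = hyperplane f"
  then show "W \<in> LG2_lines"
    using card_hyperplane subspace2_hyperplane by (auto simp: LG2_lines_def subspace_dim_def)
qed

lemma LG2_verts_cases:
  assumes "x \<in> LG2_verts"
  obtains v where "v \<noteq> vzero" "x = {vzero, v}" | f where "f \<noteq> vzero" "x = hyperplane f"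
  using assms unfolding LG2_verts_def Un_iff LG2_points_iff LG2_lines_iff by blast

lemma point_in_LG2_points: "v \<noteq> vzero \<Longrightarrow> {vzero, v} \<in> LG2_points"
  unfolding LG2_points_iff by blast

lemma hyperplane_in_LG2_lines: "f \<noteq> vzero \<Longrightarrow> hyperplane f \<in> LG2_lines"
  unfolding LG2_lines_iff by blast

lemma point_in_LG2_verts: "v \<noteq> vzero \<Longrightarrow> {vzero, v} \<in> LG2_verts"
  unfolding LG2_verts_def by (simp add: point_in_LG2_points)

lemma hyperplane_in_LG2_verts: "f \<noteq> vzero \<Longrightarrow> hyperplane f \<in> LG2_verts"
  unfolding LG2_verts_def by (simp add: hyperplane_in_LG2_lines)

lemma LG2_adj_point_hyperplane:
  "v \<noteq> vzero \<Longrightarrow> f \<noteq> vzero \<Longrightarrow> \<not> dot f v \<Longrightarrow> LG2_adj {vzero, v} (hyperplane f)"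
  unfolding LG2_adj_def using point_in_LG2_points hyperplane_in_LG2_lines
  by (auto simp: hyperplane_def)

locale involutive_linear =
  fixes T :: "vec3 \<Rightarrow> vec3"
  assumes involutive: "\<And>x. T (T x) = x"
    and additive: "\<And>x y. T (vadd x y) = vadd (T x) (T y)"
begin

lemma map_vzero [simp]: "T vzero = vzero"
  using additive[of vzero vzero] by simp

lemma image_image_eq [simp]: "T ` T ` W = W"
  by (simp add: image_image involutive)

lemma image_eq_vimage: "T ` A = T -` A"
proof (intro set_eqI iffI)
  show "x \<in> T ` A \<Longrightarrow> x \<in> T -` A" for x using involutive by auto
  show "x \<in> T -` A \<Longrightarrow> x \<in> T ` A" for x using involutive[of x] by (metis image_eqI vimageD)
qed

lemma inj: "inj T"
  by (metis injI involutive)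

lemma subspace2_image: "subspace2 W \<Longrightarrow> subspace2 (T ` W)"
  unfolding subspace2_def by (auto simp flip: additive intro!: image_eqI[of _ T vzero])

lemma subspace_dim_image: "subspace_dim W k \<Longrightarrow> subspace_dim (T ` W) k"
  unfolding subspace_dim_def
  by (simp add: subspace2_image card_image[OF inj_on_subset[OF inj]])

lemma subspace_dim_image_iff: "subspace_dim (T ` W) k \<longleftrightarrow> subspace_dim W k"
  using subspace_dim_image[of "T ` W"] subspace_dim_image[of W] by auto

lemma LG2_automorphism_image: "LG2_automorphism (image T)"
proof -
  have points: "T ` W \<in> LG2_points \<longleftrightarrow> W \<in> LG2_points"
    and lines: "T ` W \<in> LG2_lines \<longleftrightarrow> W \<in> LG2_lines" for W
    by (simp_all add: LG2_points_def LG2_lines_def subspace_dim_image_iff)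
  then have "bij_betw (image T) LG2_verts LG2_verts"
    by (intro bij_betw_byWitness[where f' = "image T"]) (auto simp: LG2_verts_def)
  moreover have "LG2_adj (T ` x) (T ` y) \<longleftrightarrow> LG2_adj x y" for x y
    unfolding LG2_adj_def points lines inj_image_subset_iff[OF inj] ..
  ultimately show ?thesis unfolding LG2_automorphism_def by blast
qed

end

definition transvection :: "vec3 \<Rightarrow> vec3 \<Rightarrow> vec3 \<Rightarrow> vec3" where
  "transvection w p x = (if dot p x then vadd x w else x)"

lemma transvection_involutive_linear:
  "\<not> dot p w \<Longrightarrow> involutive_linear (transvection w p)"
  by unfold_locales
    (auto simp: transvection_def dot_vadd_right vadd_assoc vadd_comm vadd_left_commute)

lemma transvection_vzero [simp]: "transvection w p vzero = vzero"
  by (simp add: transvection_def)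

lemma transvection_nonzero: "\<not> dot p w \<Longrightarrow> x \<noteq> vzero \<Longrightarrow> transvection w p x \<noteq> vzero"
  by (metis involutive_linear.map_vzero involutive_linear.involutive transvection_involutive_linear)

lemma dot_transvection: "dot f (transvection w p y) = dot (transvection p w f) y"
  by (cases "dot p y"; cases "dot f w")
    (simp_all add: transvection_def dot_vadd_right dot_vadd_left dot_commute[of w])

lemma transvection_image_hyperplane:
  assumes "\<not> dot p w"
  shows "transvection w p ` hyperplane f = hyperplane (transvection p w f)"
  using involutive_linear.image_eq_vimage[OF transvection_involutive_linear[OF assms]]
  by (simp add: hyperplane_def dot_transvection vimage_def)

lemma transvection_moves_point:
  assumes "dot p v" "w \<noteq> vzero"
  shows "transvection w p ` {vzero, v} \<noteq> {vzero, v}"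
proof -
  have "v \<noteq> vzero" "transvection w p v = vadd v w"
    using assms(1) by (auto simp: transvection_def)
  then show ?thesis using assms(2) by (auto simp: doubleton_eq_iff)
qed

lemma ex_even_count_off_hyperplane: "\<exists>p. p \<noteq> vzero \<and> even (card {x \<in> S. dot p x})"
proof -
  define n where "n p = card {x \<in> S. dot p x}" for p
  have n_sum: "n p = (\<Sum>x\<in>S. of_bool (dot p x))" for p
    by (simp add: n_def Int_def)
  define e1 e2 :: vec3 where "e1 = (True, False, False)" and "e2 = (False, True, False)"
  have "n e1 + n e2 + n (vadd e1 e2) =
      (\<Sum>x\<in>S. of_bool (dot e1 x) + of_bool (dot e2 x) + of_bool (dot (vadd e1 e2) x))"
    by (simp add: n_sum sum.distrib)
  also have "even \<dots>"
    by (intro dvd_sum) (simp add: dot_vadd_left)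
  finally have "even (n e1) \<or> even (n e2) \<or> even (n (vadd e1 e2))"
    by auto
  moreover have "e1 \<noteq> vzero" "e2 \<noteq> vzero" "vadd e1 e2 \<noteq> vzero"
    by (simp_all add: e1_def e2_def vzero_def vadd_def)
  ultimately show ?thesis unfolding n_def by blast
qed

lemma card_off_hyperplane: "p \<noteq> vzero \<Longrightarrow> card {x. dot p x} = 4"
proof -
  assume "p \<noteq> vzero"
  have "{x. dot p x} = UNIV - hyperplane p" by (auto simp: hyperplane_def)
  then show ?thesis
    using card_hyperplane[OF \<open>p \<noteq> vzero\<close>] by (simp add: card_Diff_subset card_UNIV_vec3)
qed

lemma ex_translation_preserving_off_hyperplane:
  assumes "p \<noteq> vzero" and "even (card {x \<in> S. dot p x})"
  shows "\<exists>w. w \<noteq> vzero \<and> \<not> dot p w \<and> (\<forall>x. dot p x \<longrightarrow> (vadd x w \<in> S \<longleftrightarrow> x \<in> S))"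
proof -
  define A where "A = {x. dot p x}"
  define T where "T = {x \<in> S. dot p x}"
  have "T \<subseteq> A" by (auto simp: T_def A_def)
  moreover have "card A = 4" unfolding A_def using assms(1) by (rule card_off_hyperplane)
  ultimately have "card T \<le> 4" by (metis card_mono finite)
  with assms(2) have card_T: "card T = 0 \<or> card T = 2 \<or> card T = 4"
    unfolding T_def by presburger
  obtain w where w: "w \<noteq> vzero" "\<not> dot p w" "\<And>x. vadd x w \<in> T \<longleftrightarrow> x \<in> T"
  proof (cases "card T = 2")
    case True
    then obtain a b where ab: "a \<noteq> b" "T = {a, b}" unfolding card_2_iff by blast
    then have "dot p a" "dot p b" by (auto simp: T_def)
    then have "\<not> dot p (vadd a b)" by (simp add: dot_vadd_right)
    moreover have "vadd x (vadd a b) \<in> T \<longleftrightarrow> x \<in> T" for x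
    proof -
      have "vadd b (vadd a b) = a" "vadd a (vadd a b) = b"
        by (simp_all add: vadd_left_commute[of b])
      moreover have "vadd x (vadd a b) \<in> {vadd b (vadd a b), vadd a (vadd a b)} \<longleftrightarrow> x \<in> {b, a}"
        by (simp only: insert_iff empty_iff vadd_right_cancel)
      ultimately show ?thesis unfolding ab(2) by (simp only: insert_commute)
    qed
    ultimately show thesis using ab(1) by (intro that[of "vadd a b"]) simp_all
  next
    case False
    obtain w where "w \<noteq> vzero" "\<not> dot p w" using ex_not_dot_nonzero by blast
    moreover have "vadd x w \<in> A \<longleftrightarrow> x \<in> A" for x
      using \<open>\<not> dot p w\<close> by (simp add: A_def dot_vadd_right)
    moreover from False card_T have "card T = 0 \<or> card T = 4" by simp
    then have "T = {} \<or> T = A"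
      using card_subset_eq[OF _ \<open>T \<subseteq> A\<close>] \<open>card A = 4\<close> by auto
    ultimately show thesis by (intro that[of w]) auto
  qed
  have "dot p (vadd x w) \<longleftrightarrow> dot p x" for x
    using w(2) by (simp add: dot_vadd_right)
  then have "dot p x \<Longrightarrow> vadd x w \<in> S \<longleftrightarrow> x \<in> S" for x
    using w(3)[of x] by (simp add: T_def)
  then show ?thesis using w(1,2) by blast
qed

lemma ex_transvection_preserving:
  "\<exists>w p. w \<noteq> vzero \<and> p \<noteq> vzero \<and> \<not> dot p w \<and> (\<forall>x. transvection w p x \<in> S \<longleftrightarrow> x \<in> S)"
proof -
  obtain p where "p \<noteq> vzero" "even (card {x \<in> S. dot p x})"
    using ex_even_count_off_hyperplane by blast
  moreover from this obtain w where
    "w \<noteq> vzero" "\<not> dot p w" "\<forall>x. dot p x \<longrightarrow> (vadd x w \<in> S \<longleftrightarrow> x \<in> S)"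
    using ex_translation_preserving_off_hyperplane by blast
  moreover from this have "\<forall>x. transvection w p x \<in> S \<longleftrightarrow> x \<in> S"
    by (simp add: transvection_def)
  ultimately show ?thesis by blast
qed

lemma not_distinguishing_if_transvection_preserves:
  assumes "w \<noteq> vzero" "p \<noteq> vzero" "\<not> dot p w"
    and preserves: "\<And>x. x \<in> LG2_verts \<Longrightarrow> c (transvection w p ` x) = c x"
  shows "\<not> distinguishing_coloring c"
proof
  assume "distinguishing_coloring c"
  moreover have "LG2_automorphism (image (transvection w p))"
    using transvection_involutive_linear[OF assms(3)]
    by (rule involutive_linear.LG2_automorphism_image)
  ultimately have fixed: "\<forall>x\<in>LG2_verts. transvection w p ` x = x"
    using preserves unfolding distinguishing_coloring_def by blast
  obtain v where "dot p v" using ex_dot[OF assms(2)] by blast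
  then have "v \<noteq> vzero" by (cases "v = vzero") simp_all
  then have "{vzero, v} \<in> LG2_verts" by (rule point_in_LG2_verts)
  with fixed have "transvection w p ` {vzero, v} = {vzero, v}" by (rule bspec)
  then show False using transvection_moves_point[OF \<open>dot p v\<close> assms(1)] by contradiction
qed

lemma proper_coloring_point_hyperplane:
  "proper_coloring c \<Longrightarrow> v \<noteq> vzero \<Longrightarrow> f \<noteq> vzero \<Longrightarrow> \<not> dot f v \<Longrightarrow>
    c {vzero, v} \<noteq> c (hyperplane f)"
  unfolding proper_coloring_def
  using LG2_adj_point_hyperplane point_in_LG2_verts hyperplane_in_LG2_verts by blast

lemma three_coloring_less: "three_coloring c \<Longrightarrow> x \<in> LG2_verts \<Longrightarrow> c x < 3"
  by (simp add: three_coloring_def)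

lemma eq_if_same_side_of_colour:
  fixes a b x y :: nat
  assumes "a < 3" "b < 3" "x < 3" "y < 3" "b \<noteq> a" "x \<noteq> a" "y \<noteq> a" "x = b \<longleftrightarrow> y = b"
  shows "x = y"
  using assms by (auto simp: numeral_3_eq_3 less_Suc_eq)

lemma ex_other_colour: "\<exists>b :: nat. b < 3 \<and> b \<noteq> a"
  by (rule exI[of _ "if a = 0 then 1 else 0"]) simp

text \<open>The lines f^\<bottom> are permuted through the dual transvection f \<mapsto> f + (f\<cdot>w) p.\<close>
lemma not_distinguishing_if_points_monochromatic:
  assumes c: "three_coloring c" "proper_coloring c"
    and mono: "\<forall>x\<in>LG2_points. \<forall>y\<in>LG2_points. c x = c y"
  shows "\<not> distinguishing_coloring c"
proof -
  define a where "a = c {vzero, (True, True, True)}"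
  have one: "(True, True, True) \<noteq> vzero" by (simp add: vzero_def)
  have a: "a < 3" unfolding a_def using three_coloring_less[OF c(1) point_in_LG2_verts[OF one]] .
  have points: "c {vzero, v} = a" if "v \<noteq> vzero" for v
    using mono point_in_LG2_points[OF that] point_in_LG2_points[OF one] unfolding a_def by blast
  have lines: "c (hyperplane f) \<noteq> a" if "f \<noteq> vzero" for f
    using ex_not_dot_nonzero[of f] proper_coloring_point_hyperplane[OF c(2) _ that] points by metis
  obtain b :: nat where b: "b < 3" "b \<noteq> a" using ex_other_colour by blast
  obtain w p where wp: "w \<noteq> vzero" "p \<noteq> vzero" "\<not> dot p w"
    and same_side: "\<And>f. c (hyperplane (transvection w p f)) = b \<longleftrightarrow> c (hyperplane f) = b"
    using ex_transvection_preserving[of "{f. c (hyperplane f) = b}"] by auto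
  have "\<not> dot w p" using wp(3) dot_commute by metis
  show ?thesis
  proof (rule not_distinguishing_if_transvection_preserves[OF wp(2) wp(1) \<open>\<not> dot w p\<close>])
    fix x assume "x \<in> LG2_verts"
    then show "c (transvection p w ` x) = c x"
    proof (cases rule: LG2_verts_cases)
      case (1 v)
      then show ?thesis using points transvection_nonzero[OF \<open>\<not> dot w p\<close>] by simp
    next
      case (2 f)
      then have "transvection w p f \<noteq> vzero" using transvection_nonzero[OF wp(3)] by blast
      then show ?thesis
        unfolding 2 transvection_image_hyperplane[OF \<open>\<not> dot w p\<close>]
        using eq_if_same_side_of_colour[OF a b(1) _ _ b(2) lines lines same_side]
          three_coloring_less[OF c(1)] hyperplane_in_LG2_verts 2(1) by blast
    qed
  qed
qed

lemma not_distinguishing_if_lines_monochromatic: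
  assumes c: "three_coloring c" "proper_coloring c"
    and mono: "\<forall>x\<in>LG2_lines. \<forall>y\<in>LG2_lines. c x = c y"
  shows "\<not> distinguishing_coloring c"
proof -
  define a where "a = c (hyperplane (True, True, True))"
  have one: "(True, True, True) \<noteq> vzero" by (simp add: vzero_def)
  have a: "a < 3" unfolding a_def using three_coloring_less[OF c(1) hyperplane_in_LG2_verts[OF one]] .
  have lines: "c (hyperplane f) = a" if "f \<noteq> vzero" for f
    using mono hyperplane_in_LG2_lines[OF that] hyperplane_in_LG2_lines[OF one] unfolding a_def by blast
  have points: "c {vzero, v} \<noteq> a" if "v \<noteq> vzero" for v
    using ex_not_dot_nonzero[of v] dot_commute proper_coloring_point_hyperplane[OF c(2) that] lines
    by metis
  obtain b :: nat where b: "b < 3" "b \<noteq> a" using ex_other_colour by blast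
  obtain w p where wp: "w \<noteq> vzero" "p \<noteq> vzero" "\<not> dot p w"
    and same_side: "\<And>v. c {vzero, transvection w p v} = b \<longleftrightarrow> c {vzero, v} = b"
    using ex_transvection_preserving[of "{v. c {vzero, v} = b}"] by auto
  have "\<not> dot w p" using wp(3) dot_commute by metis
  show ?thesis
  proof (rule not_distinguishing_if_transvection_preserves[OF wp])
    fix x assume "x \<in> LG2_verts"
    then show "c (transvection w p ` x) = c x"
    proof (cases rule: LG2_verts_cases)
      case (1 v)
      then have "transvection w p v \<noteq> vzero" using transvection_nonzero[OF wp(3)] by blast
      then show ?thesis
        unfolding 1 image_insert image_empty transvection_vzero
        using eq_if_same_side_of_colour[OF a b(1) _ _ b(2) points points same_side]
          three_coloring_less[OF c(1)] point_in_LG2_verts 1(1) by blast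
    next
      case (2 f)
      then show ?thesis
        using lines transvection_nonzero[OF \<open>\<not> dot w p\<close>]
        by (simp add: transvection_image_hyperplane[OF wp(3)])
    qed
  qed
qed

theorem mainTheorem14:
  shows "\<not> (\<exists>c. three_coloring c \<and> proper_coloring c \<and>
              distinguishing_coloring c \<and> monochromatic_coloring c)"
  using not_distinguishing_if_points_monochromatic not_distinguishing_if_lines_monochromatic
  unfolding monochromatic_coloring_def by blast

end
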